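(* In the model described in the context, suppose $\triangle C=0$, and let $X(0)$ be the set of symmetric Stackelberg equilibria (symmetric leader reactions when all followers' forward positions are $0$), which depends on $\alpha_x$. (1) There exists a unique $\bar y<k$ such that, for $y\in[0,k]$, there exists $x\in X(0)$ with $y_j(\mathbf0,x\mathbf1)=y$ if and only if $y\le\bar y$ or $y=k$. Moreover $\bar y=\big(1+O(\tfrac1{\sqrt N})\big)\frac k2$. (2) There exists a unique $\bar\alpha_x\in\mathbb{R}_+$ such that $\alpha_x\le\bar\alpha_x$ iff there exists $x\in X(0)$ with $y_j(\mathbf0,x\mathbf1)\le\bar y$, and a unique $\underline\alpha_x\le\bar\alpha_x$ such that $\alpha_x\ge\underline\alpha_x$ iff there exists $x\in X(0)$ with $y_j(\mathbf0,x\mathbf1)=k$. Moreover $|X(0)|=2$ for all $\alpha_x\in[\underline\alpha_x,\bar\alpha_x]$.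
   Context: Model: $M\ge1$ leaders and $N\ge2$ followers; inverse demand $P(q)=\alpha-\beta q$, $\alpha,\beta>0$; leader marginal cost $C$, follower marginal cost $c$, $c\ge C>0$; follower capacity $k>0$. Leader $i$ produces $x_i\ge0$; follower $j$ has forward position $f_j\in\mathbb{R}$ and chooses spot production $y_j\in[0,k]$. Given $\mathbf f,\mathbf x$, the spot market is the game among followers where follower $j$ chooses $y_j\in[0,k]$ to maximize $P(\sum_ix_i+\sum_{j'}y_{j'})(y_j-f_j)-cy_j$; its unique Nash equilibrium is $\mathbf y(\mathbf f,\mathbf x)=(y_1(\mathbf f,\mathbf x),\dots,y_N(\mathbf f,\mathbf x))$. Leader $i$'s payoff is $\psi_i=(P(\sum_ix_i+\sum_{j'}y_{j'}(\mathbf f,\mathbf x))-C)x_i$; $\psi_i(\bar x;x\mathbf1,\mathbf f)$ denotes this payoff when leader $i$ produces $\bar x$ and all other leaders produce $x$. $X(0)=\{x\in\mathbb{R}_+:\psi_i(x;x\mathbf1,\mathbf0)\ge\psi_i(\bar x;x\mathbf1,\mathbf0)\ \forall\bar x\in\mathbb{R}_+,\ \forall i\}$. $\alpha_x=(\alpha-C)/\beta$, $\triangle C=(c-C)/\beta$. $O(\cdot)$ is standard Landau notation. *)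

theory Defs
  imports "HOL-Analysis.Analysis" "HOL-Library.Landau_Symbols"
begin

text \<open>Leaders are indexed by {..<M}, followers by {..<N}. Vectors are functions nat => real.\<close>

definition invdem :: "real \<Rightarrow> real \<Rightarrow> real \<Rightarrow> real" where
  "invdem \<alpha> \<beta> q = \<alpha> - \<beta> * q"

definition follower_payoff ::
  "real \<Rightarrow> real \<Rightarrow> real \<Rightarrow> nat \<Rightarrow> nat \<Rightarrow> (nat \<Rightarrow> real) \<Rightarrow> (nat \<Rightarrow> real) \<Rightarrow> (nat \<Rightarrow> real) \<Rightarrow> nat \<Rightarrow> real" where
  "follower_payoff \<alpha> \<beta> c M N f x y j =
     invdem \<alpha> \<beta> ((\<Sum>i<M. x i) + (\<Sum>j'<N. y j')) * (y j - f j) - c * y j"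

definition spot_NE ::
  "real \<Rightarrow> real \<Rightarrow> real \<Rightarrow> real \<Rightarrow> nat \<Rightarrow> nat \<Rightarrow> (nat \<Rightarrow> real) \<Rightarrow> (nat \<Rightarrow> real) \<Rightarrow> (nat \<Rightarrow> real) \<Rightarrow> bool" where
  "spot_NE \<alpha> \<beta> c k M N f x y \<longleftrightarrow>
     (\<forall>j. j \<ge> N \<longrightarrow> y j = 0) \<and>
     (\<forall>j<N. 0 \<le> y j \<and> y j \<le> k \<and>
        (\<forall>z. 0 \<le> z \<and> z \<le> k \<longrightarrow>
           follower_payoff \<alpha> \<beta> c M N f x (y(j := z)) j \<le> follower_payoff \<alpha> \<beta> c M N f x y j))"

definition spot_y ::
  "real \<Rightarrow> real \<Rightarrow> real \<Rightarrow> real \<Rightarrow> nat \<Rightarrow> nat \<Rightarrow> (nat \<Rightarrow> real) \<Rightarrow> (nat \<Rightarrow> real) \<Rightarrow> nat \<Rightarrow> real" where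
  "spot_y \<alpha> \<beta> c k M N f x = (THE y. spot_NE \<alpha> \<beta> c k M N f x y)"

definition leader_payoff ::
  "real \<Rightarrow> real \<Rightarrow> real \<Rightarrow> real \<Rightarrow> real \<Rightarrow> nat \<Rightarrow> nat \<Rightarrow> (nat \<Rightarrow> real) \<Rightarrow> (nat \<Rightarrow> real) \<Rightarrow> nat \<Rightarrow> real" where
  "leader_payoff \<alpha> \<beta> C c k M N f x i =
     (invdem \<alpha> \<beta> ((\<Sum>i'<M. x i') + (\<Sum>j<N. spot_y \<alpha> \<beta> c k M N f x j)) - C) * x i"

definition psi ::
  "real \<Rightarrow> real \<Rightarrow> real \<Rightarrow> real \<Rightarrow> real \<Rightarrow> nat \<Rightarrow> nat \<Rightarrow> nat \<Rightarrow> real \<Rightarrow> real \<Rightarrow> (nat \<Rightarrow> real) \<Rightarrow> real" where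
  "psi \<alpha> \<beta> C c k M N i xbar x f =
     leader_payoff \<alpha> \<beta> C c k M N f ((\<lambda>_. x)(i := xbar)) i"

definition X0 :: "real \<Rightarrow> real \<Rightarrow> real \<Rightarrow> real \<Rightarrow> real \<Rightarrow> nat \<Rightarrow> nat \<Rightarrow> real set" where
  "X0 \<alpha> \<beta> C c k M N = {x. 0 \<le> x \<and>
     (\<forall>i<M. \<forall>xbar\<ge>0. psi \<alpha> \<beta> C c k M N i x x (\<lambda>_. 0) \<ge> psi \<alpha> \<beta> C c k M N i xbar x (\<lambda>_. 0))}"

definition y_sym :: "real \<Rightarrow> real \<Rightarrow> real \<Rightarrow> real \<Rightarrow> nat \<Rightarrow> nat \<Rightarrow> real \<Rightarrow> nat \<Rightarrow> real" where
  "y_sym \<alpha> \<beta> c k M N x j = spot_y \<alpha> \<beta> c k M N (\<lambda>_. 0) (\<lambda>_. x) j"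

definition alpha_x :: "real \<Rightarrow> real \<Rightarrow> real \<Rightarrow> real" where
  "alpha_x \<alpha> \<beta> C = (\<alpha> - C) / \<beta>"

definition deltaC :: "real \<Rightarrow> real \<Rightarrow> real \<Rightarrow> real" where
  "deltaC \<beta> C c = (c - C) / \<beta>"

end

theory Submission
  imports Defs
begin

text \<open>
  With zero forward positions and \<open>c = C\<close>, the spot market has a unique equilibrium in which every
  follower produces \<open>clip k\<close> of the residual demand divided by \<open>N + 1\<close>. Writing \<open>s = sqrt (N + 1)\<close>,
  a leader facing residual intercept \<open>b\<close> therefore has a profit with two regimes: followers
  unconstrained (profit \<open>z (b - z) / s\<^sup>2\<close>, best at \<open>b / 2\<close>) and followers at capacity (profit
  \<open>z (b - z - N k)\<close>, best at \<open>(b - N k) / 2\<close>); the two local maxima tie exactly at \<open>b = k s (s + 1)\<close>.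
  Solving the symmetric fixed point \<open>x = BR (\<alpha>\<^sub>x - (M - 1) x)\<close> leaves two families of equilibria:
  \<open>x = \<alpha>\<^sub>x / (M + 1)\<close>, with follower output \<open>\<alpha>\<^sub>x / ((M + 1) (N + 1))\<close> up to \<open>ybar = (1 + 1 / s) k / 2\<close>,
  and \<open>x = (\<alpha>\<^sub>x - N k) / (M + 1)\<close> with followers at capacity; they coexist exactly on
  \<open>[alpha_low, alpha_bar]\<close>.
\<close>

section \<open>Projection onto an interval\<close>

definition clip :: "real \<Rightarrow> real \<Rightarrow> real" where "clip k t = max 0 (min k t)"

lemma clip_cases:
  assumes "0 \<le> k"
  obtains "w < 0" "clip k w = 0" | "k < w" "clip k w = k" | "0 \<le> w" "w \<le> k" "clip k w = w"
  using assms unfolding clip_def by fastforce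

lemma clip_eq_iff_variational:
  assumes k: "0 \<le> k"
  shows "y = clip k w \<longleftrightarrow> 0 \<le> y \<and> y \<le> k \<and> (\<forall>z. 0 \<le> z \<and> z \<le> k \<longrightarrow> (z - y) * (w - z) \<le> 0)"
proof
  assume y: "y = clip k w"
  have "(z - y) * (w - z) \<le> 0" if "0 \<le> z" "z \<le> k" for z
    using clip_cases[OF k, of w]
  proof cases
    case 1
    then show ?thesis using y that by (simp add: mult_nonneg_nonpos)
  next
    case 2
    then show ?thesis using y that by (simp add: mult_nonpos_nonneg)
  next
    case 3
    then have "(z - y) * (w - z) = - ((z - w) * (z - w))" using y by (simp add: algebra_simps)
    then show ?thesis by simp
  qed
  moreover have "0 \<le> y" "y \<le> k" using y k unfolding clip_def by auto
  ultimately show "0 \<le> y \<and> y \<le> k \<and> (\<forall>z. 0 \<le> z \<and> z \<le> k \<longrightarrow> (z - y) * (w - z) \<le> 0)"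
    by blast
next
  assume h: "0 \<le> y \<and> y \<le> k \<and> (\<forall>z. 0 \<le> z \<and> z \<le> k \<longrightarrow> (z - y) * (w - z) \<le> 0)"
  \<comment> \<open>test the inequality at the midpoint of \<open>y\<close> and the projection \<open>p\<close>\<close>
  define p where "p = clip k w"
  have "0 \<le> p" "p \<le> k" using k unfolding p_def clip_def by auto
  then have "0 \<le> (y + p) / 2" "(y + p) / 2 \<le> k" using h by auto
  then have "((y + p) / 2 - y) * (w - (y + p) / 2) \<le> 0" using h by blast
  moreover have "(p - y) * (2 * w - y - p) = 4 * (((y + p) / 2 - y) * (w - (y + p) / 2))"
    by (simp add: field_simps)
  ultimately have mid: "(p - y) * (2 * w - y - p) \<le> 0" by linarith
  show "y = p"
    using clip_cases[OF k, of w]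
  proof cases
    case 1
    have "\<not> 0 < y * (y - 2 * w)" using mid 1 by (simp add: p_def algebra_simps)
    then have "\<not> 0 < y" using 1 mult_pos_pos[of y "y - 2 * w"] by linarith
    then show ?thesis using 1 h by (simp add: p_def)
  next
    case 2
    have "\<not> 0 < (k - y) * (2 * w - y - k)" using mid 2 by (simp add: p_def)
    then have "\<not> 0 < k - y" using 2 h mult_pos_pos[of "k - y" "2 * w - y - k"] by linarith
    then show ?thesis using 2 h by (simp add: p_def)
  next
    case 3
    have "(w - y) * (w - y) \<le> 0" using mid 3 by (simp add: p_def algebra_simps)
    then have "(w - y) * (w - y) = 0" using zero_le_square[of "w - y"] by linarith
    then show ?thesis using 3 by (simp add: p_def)
  qed
qed

lemma mono_clip: "mono (clip k)"
  unfolding clip_def by (intro monoI) auto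

lemma clip_fixed_point_iff:
  assumes "0 \<le> k" and "0 \<le> n"
  shows "v = clip k (u - n * v) \<longleftrightarrow> v = clip k (u / (n + 1))"
proof -
  have antitone: "v' \<le> v"
    if "v = clip k (u - n * v)" "v' = clip k (u - n * v')" "v \<le> v'" for v v'
  proof -
    have "u - n * v' \<le> u - n * v" using that(3) assms by (simp add: mult_left_mono)
    then show ?thesis using that(1,2) monoD[OF mono_clip, of "u - n * v'" "u - n * v" k] by simp
  qed
  then have unique: "v = v'" if "v = clip k (u - n * v)" "v' = clip k (u - n * v')" for v v'
    using that by (metis linorder_linear order_antisym)
  have fixed: "clip k (u / (n + 1)) = clip k (u - n * clip k (u / (n + 1)))"
  proof -
    have n1: "0 < n + 1" using assms by simp
    consider "u < 0" | "(n + 1) * k < u" | "0 \<le> u" "u \<le> (n + 1) * k" by linarith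
    then show ?thesis
    proof cases
      case 1
      then have "u / (n + 1) < 0" using n1 by (simp add: divide_neg_pos)
      then show ?thesis using 1 assms unfolding clip_def by simp
    next
      case 2
      then have "k < u / (n + 1)" "k < u - n * k" using n1 by (simp_all add: field_simps)
      then show ?thesis using assms unfolding clip_def by simp
    next
      case 3
      then have "0 \<le> u / (n + 1)" "u / (n + 1) \<le> k" "u - n * (u / (n + 1)) = u / (n + 1)"
        using n1 by (simp_all add: field_simps)
      then show ?thesis unfolding clip_def by simp
    qed
  qed
  then show ?thesis using unique fixed by metis
qed

section \<open>The spot market with zero forward positions\<close>

lemma sum_fun_upd:
  fixes f :: "'a \<Rightarrow> 'b::ab_group_add"
  assumes "finite A" "a \<in> A"
  shows "sum (f(a := z)) A = sum f A - f a + z"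
proof -
  have "sum (f(a := z)) A = z + sum (f(a := z)) (A - {a})" using assms by (simp add: sum.remove)
  also have "sum (f(a := z)) (A - {a}) = sum f (A - {a})" by (rule sum.cong) auto
  finally show ?thesis using assms by (simp add: sum_diff1)
qed

lemma follower_payoff_deviation:
  assumes "\<beta> \<noteq> 0" "j < N"
  shows "follower_payoff \<alpha> \<beta> c M N (\<lambda>_. 0) x (y(j := z)) j - follower_payoff \<alpha> \<beta> c M N (\<lambda>_. 0) x y j
    = \<beta> * ((z - y j) * ((\<alpha> - c) / \<beta> - sum x {..<M} - sum y {..<N} - z))"
proof -
  have "sum (y(j := z)) {..<N} = sum y {..<N} - y j + z" using assms by (intro sum_fun_upd) auto
  then show ?thesis
    using assms unfolding follower_payoff_def invdem_def by (simp only: fun_upd_same) (simp add: field_simps)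
qed

lemma spot_NE_zero_forward_iff:
  assumes "0 < \<beta>" "0 \<le> k"
  shows "spot_NE \<alpha> \<beta> c k M N (\<lambda>_. 0) x y \<longleftrightarrow>
    (\<forall>j\<ge>N. y j = 0) \<and> (\<forall>j<N. y j = clip k ((\<alpha> - c) / \<beta> - sum x {..<M} - sum y {..<N}))"
proof -
  define w where "w = (\<alpha> - c) / \<beta> - sum x {..<M} - sum y {..<N}"
  have "follower_payoff \<alpha> \<beta> c M N (\<lambda>_. 0) x (y(j := z)) j \<le> follower_payoff \<alpha> \<beta> c M N (\<lambda>_. 0) x y j
      \<longleftrightarrow> (z - y j) * (w - z) \<le> 0" if "j < N" for j z
  proof -
    have "follower_payoff \<alpha> \<beta> c M N (\<lambda>_. 0) x (y(j := z)) j - follower_payoff \<alpha> \<beta> c M N (\<lambda>_. 0) x y j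
        = \<beta> * ((z - y j) * (w - z))"
      using follower_payoff_deviation[of \<beta> j N] assms that unfolding w_def by simp
    moreover have "\<beta> * ((z - y j) * (w - z)) \<le> 0 \<longleftrightarrow> (z - y j) * (w - z) \<le> 0"
      using assms by (simp add: mult_le_0_iff)
    ultimately show ?thesis by linarith
  qed
  then show ?thesis
    unfolding spot_NE_def w_def[symmetric] using clip_eq_iff_variational[OF assms(2)] by auto
qed

lemma spot_y_zero_forward:
  assumes "0 < \<beta>" "0 \<le> k"
  shows "spot_y \<alpha> \<beta> c k M N (\<lambda>_. 0) x =
    (\<lambda>j. if j < N then clip k (((\<alpha> - c) / \<beta> - sum x {..<M}) / (real N + 1)) else 0)"
proof -
  define u where "u = (\<alpha> - c) / \<beta> - sum x {..<M}"
  define v where "v = clip k (u / (real N + 1))"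
  define Y where "Y = (\<lambda>j. if j < N then v else (0::real))"
  have v_fixed: "v' = v \<longleftrightarrow> v' = clip k (u - N * v')" for v' :: real
    using clip_fixed_point_iff[OF assms(2), of "real N"] unfolding v_def by simp
  have "sum Y {..<N} = N * v" unfolding Y_def by simp
  then have "spot_NE \<alpha> \<beta> c k M N (\<lambda>_. 0) x Y"
    using v_fixed[of v] unfolding spot_NE_zero_forward_iff[OF assms] u_def[symmetric]
    by (simp add: Y_def)
  moreover have "y = Y" if "spot_NE \<alpha> \<beta> c k M N (\<lambda>_. 0) x y" for y
  proof -
    define v' where "v' = clip k (u - sum y {..<N})"
    have y: "\<forall>j\<ge>N. y j = 0" "\<forall>j<N. y j = v'"
      using that unfolding spot_NE_zero_forward_iff[OF assms] u_def[symmetric] v'_def by blast+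
    then have "sum y {..<N} = N * v'" by simp
    then have "v' = v" using v_fixed[of v'] v'_def by metis
    then show ?thesis using y unfolding Y_def by (auto simp: not_less)
  qed
  ultimately have "spot_y \<alpha> \<beta> c k M N (\<lambda>_. 0) x = Y" unfolding spot_y_def by (rule the_equality)
  then show ?thesis unfolding Y_def v_def u_def .
qed

section \<open>The leader's best response\<close>

text \<open>
  Profit of a leader producing \<open>z\<close> against residual demand intercept \<open>b\<close> (in units of \<open>\<beta>\<close>),
  where \<open>s\<^sup>2 = N + 1\<close> and the \<open>N\<close> followers each produce \<open>clip k ((b - z) / s\<^sup>2)\<close>.
\<close>

definition leader_profit :: "real \<Rightarrow> real \<Rightarrow> real \<Rightarrow> real \<Rightarrow> real" where
  "leader_profit s k b z = z * (b - z - (s\<^sup>2 - 1) * clip k ((b - z) / s\<^sup>2))"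

definition max_leader_profit :: "real \<Rightarrow> real \<Rightarrow> real \<Rightarrow> real" where
  "max_leader_profit s k b =
     (if b \<le> 0 then 0 else if b \<le> k * s * (s + 1) then b\<^sup>2 / (4 * s\<^sup>2) else (b - (s\<^sup>2 - 1) * k)\<^sup>2 / 4)"

definition leader_best_response :: "real \<Rightarrow> real \<Rightarrow> real \<Rightarrow> real \<Rightarrow> bool" where
  "leader_best_response s k b z \<longleftrightarrow>
     (b \<le> 0 \<and> z = 0) \<or> (0 < b \<and> b \<le> k * s * (s + 1) \<and> z = b / 2) \<or>
     (k * s * (s + 1) \<le> b \<and> z = (b - (s\<^sup>2 - 1) * k) / 2)"

lemma leader_profit_shutdown:
  assumes "0 \<le> k" "s \<noteq> 0" "b - z \<le> 0"
  shows "leader_profit s k b z = z * (b - z)"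
proof -
  have "(b - z) / s\<^sup>2 \<le> 0" using assms by (simp add: divide_nonpos_pos)
  then show ?thesis using assms unfolding leader_profit_def clip_def by simp
qed

lemma leader_profit_interior:
  assumes "s \<noteq> 0" "0 \<le> b - z" "b - z \<le> s\<^sup>2 * k"
  shows "leader_profit s k b z = z * (b - z) / s\<^sup>2"
proof -
  have "0 \<le> (b - z) / s\<^sup>2" "(b - z) / s\<^sup>2 \<le> k" using assms by (simp_all add: field_simps)
  then show ?thesis using assms unfolding leader_profit_def clip_def by (simp add: field_simps)
qed

lemma leader_profit_capacity:
  assumes "0 \<le> k" "s \<noteq> 0" "s\<^sup>2 * k \<le> b - z"
  shows "leader_profit s k b z = z * (b - z - (s\<^sup>2 - 1) * k)"
proof -
  have "k \<le> (b - z) / s\<^sup>2" using assms by (simp add: field_simps)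
  then show ?thesis using assms unfolding leader_profit_def clip_def by simp
qed

lemma four_mult_le_square_add: "4 * (z * t) \<le> (z + t)\<^sup>2" for z t :: real
proof -
  have "0 \<le> (z - t)\<^sup>2" by simp
  then show ?thesis by (simp add: power2_eq_square algebra_simps)
qed

lemma four_mult_eq_square_add_iff: "4 * (z * t) = (z + t)\<^sup>2 \<longleftrightarrow> z = t" for z t :: real
proof -
  have "(z + t)\<^sup>2 - 4 * (z * t) = (z - t)\<^sup>2" by (simp add: power2_eq_square algebra_simps)
  then show ?thesis by auto
qed

lemma capacity_value_minus_interior_value:
  fixes s b k :: real
  assumes "s \<noteq> 0"
  shows "(b - (s\<^sup>2 - 1) * k)\<^sup>2 / 4 - b\<^sup>2 / (4 * s\<^sup>2)
    = (s - 1) * (s + 1) * (b - k * s * (s + 1)) * (b - k * s * (s - 1)) / (4 * s\<^sup>2)"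
  using assms by (simp add: field_simps power2_eq_square)

lemma max_leader_profit_capacity:
  assumes "1 < s" "0 < k" "k * s * (s + 1) \<le> b"
  shows "max_leader_profit s k b = (b - (s\<^sup>2 - 1) * k)\<^sup>2 / 4"
proof (cases "b = k * s * (s + 1)")
  case True
  have "0 < b" using True assms by simp
  then have "max_leader_profit s k b = b\<^sup>2 / (4 * s\<^sup>2)"
    using True unfolding max_leader_profit_def by simp
  moreover have "(b - (s\<^sup>2 - 1) * k)\<^sup>2 / 4 - b\<^sup>2 / (4 * s\<^sup>2) = 0"
    using capacity_value_minus_interior_value[of s b k] True assms by simp
  ultimately show ?thesis by simp
next
  case False
  moreover have "0 < k * s * (s + 1)" using assms by simp
  ultimately have "0 < b" "\<not> b \<le> k * s * (s + 1)" using assms by linarith+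
  then show ?thesis unfolding max_leader_profit_def by simp
qed

lemma max_leader_profit_nonneg: "0 \<le> max_leader_profit s k b"
  unfolding max_leader_profit_def by simp

lemma max_leader_profit_pos:
  assumes "1 < s" "0 < k" "0 < b"
  shows "0 < max_leader_profit s k b"
proof (cases "b \<le> k * s * (s + 1)")
  case True
  then show ?thesis using assms unfolding max_leader_profit_def by simp
next
  case False
  have "k * s * (s + 1) - (s\<^sup>2 - 1) * k = k * (s + 1)" by (simp add: power2_eq_square algebra_simps)
  moreover have "0 < k * (s + 1)" using assms by simp
  ultimately have "0 < b - (s\<^sup>2 - 1) * k" using False by linarith
  then show ?thesis using False assms unfolding max_leader_profit_def by simp
qed

lemma leader_profit_optimal_shutdown:
  assumes "1 < s" "0 < k" "0 \<le> z" "b - z \<le> 0"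
  shows "leader_profit s k b z \<le> max_leader_profit s k b \<and>
    (leader_profit s k b z = max_leader_profit s k b \<longrightarrow> leader_best_response s k b z)"
proof -
  have profit: "leader_profit s k b z = z * (b - z)" using leader_profit_shutdown assms by simp
  have nonpos: "z * (b - z) \<le> 0" using assms by (simp add: mult_nonneg_nonpos)
  have "leader_best_response s k b z" if "z * (b - z) = max_leader_profit s k b"
  proof (cases "b \<le> 0")
    case True
    then have "z * (b - z) = 0" using that unfolding max_leader_profit_def by simp
    then have "z = 0" using True assms by auto
    then show ?thesis using True unfolding leader_best_response_def by simp
  next
    case False
    then show ?thesis using that nonpos max_leader_profit_pos[of s k b] assms by simp
  qed
  then show ?thesis using profit nonpos max_leader_profit_nonneg[of s k b] by auto
qed

lemma leader_profit_optimal_interior: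
  assumes "1 < s" "0 < k" "0 \<le> z" "0 \<le> b - z" "b - z \<le> s\<^sup>2 * k"
  shows "leader_profit s k b z \<le> max_leader_profit s k b \<and>
    (leader_profit s k b z = max_leader_profit s k b \<longrightarrow> leader_best_response s k b z)"
proof -
  have s0: "s \<noteq> 0" using assms by simp
  have profit: "leader_profit s k b z = z * (b - z) / s\<^sup>2" using leader_profit_interior s0 assms by simp
  have "4 * (z * (b - z)) \<le> b\<^sup>2" using four_mult_le_square_add[of z "b - z"] by simp
  from divide_right_mono[OF this, of "4 * s\<^sup>2"]
  have amgm: "z * (b - z) / s\<^sup>2 \<le> b\<^sup>2 / (4 * s\<^sup>2)" by simp
  show ?thesis
  proof (cases "b \<le> k * s * (s + 1)")
    case True
    have max: "max_leader_profit s k b = b\<^sup>2 / (4 * s\<^sup>2)"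
      using True assms unfolding max_leader_profit_def by auto
    have "z = b / 2" if "z * (b - z) / s\<^sup>2 = b\<^sup>2 / (4 * s\<^sup>2)"
    proof -
      have "(4 * (z * (b - z))) * s\<^sup>2 = b\<^sup>2 * s\<^sup>2" using that s0 by (simp add: field_simps)
      then have "4 * (z * (b - z)) = b\<^sup>2" using s0 by simp
      then show ?thesis using four_mult_eq_square_add_iff[of z "b - z"] by simp
    qed
    then show ?thesis using profit amgm max True assms unfolding leader_best_response_def by auto
  next
    case False
    have "k * s * (s - 1) < k * s * (s + 1)" using assms by simp
    then have "0 < b - k * s * (s - 1)" using False by linarith
    then have "0 < (s - 1) * (s + 1) * (b - k * s * (s + 1)) * (b - k * s * (s - 1))"
      using False assms by (intro mult_pos_pos) auto
    then have "0 < (s - 1) * (s + 1) * (b - k * s * (s + 1)) * (b - k * s * (s - 1)) / (4 * s\<^sup>2)"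
      using s0 by (intro divide_pos_pos) auto
    then have "b\<^sup>2 / (4 * s\<^sup>2) < (b - (s\<^sup>2 - 1) * k)\<^sup>2 / 4"
      using capacity_value_minus_interior_value[of s b k] s0 by linarith
    then show ?thesis using profit amgm max_leader_profit_capacity[of s k b] False assms by simp
  qed
qed

lemma leader_profit_optimal_capacity:
  assumes "1 < s" "0 < k" "0 \<le> z" "s\<^sup>2 * k \<le> b - z"
  shows "leader_profit s k b z \<le> max_leader_profit s k b \<and>
    (leader_profit s k b z = max_leader_profit s k b \<longrightarrow> leader_best_response s k b z)"
proof -
  define t where "t = b - z - (s\<^sup>2 - 1) * k"
  have profit: "leader_profit s k b z = z * t" using leader_profit_capacity assms unfolding t_def by simp
  have amgm: "z * t \<le> (b - (s\<^sup>2 - 1) * k)\<^sup>2 / 4"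
    using four_mult_le_square_add[of z t] unfolding t_def by simp
  show ?thesis
  proof (cases "k * s * (s + 1) \<le> b")
    case True
    have "z = (b - (s\<^sup>2 - 1) * k) / 2" if "z * t = (b - (s\<^sup>2 - 1) * k)\<^sup>2 / 4"
      using that four_mult_eq_square_add_iff[of z t] unfolding t_def by simp
    then show ?thesis using profit amgm max_leader_profit_capacity[of s k b] True assms
      unfolding leader_best_response_def by auto
  next
    case False
    have "k * s * (s - 1) < s\<^sup>2 * k" using assms by (simp add: power2_eq_square algebra_simps)
    then have pos: "0 < b - k * s * (s - 1)" using assms by linarith
    have neg: "(s - 1) * (s + 1) * (b - k * s * (s + 1)) < 0" using False assms by (intro mult_pos_neg) auto
    from mult_neg_pos[OF neg pos]
    have "(s - 1) * (s + 1) * (b - k * s * (s + 1)) * (b - k * s * (s - 1)) < 0" .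
    then have "(s - 1) * (s + 1) * (b - k * s * (s + 1)) * (b - k * s * (s - 1)) / (4 * s\<^sup>2) < 0"
      using assms by (intro divide_neg_pos) auto
    then have "(b - (s\<^sup>2 - 1) * k)\<^sup>2 / 4 < b\<^sup>2 / (4 * s\<^sup>2)"
      using capacity_value_minus_interior_value[of s b k] assms by linarith
    moreover have "0 < s\<^sup>2 * k" using assms by simp
    then have "0 < b" using assms by linarith
    ultimately show ?thesis using profit amgm False unfolding max_leader_profit_def by simp
  qed
qed

lemma leader_profit_le_max:
  assumes "1 < s" "0 < k" "0 \<le> z"
  shows "leader_profit s k b z \<le> max_leader_profit s k b \<and>
    (leader_profit s k b z = max_leader_profit s k b \<longrightarrow> leader_best_response s k b z)"
proof -
  consider "b - z \<le> 0" | "0 \<le> b - z" "b - z \<le> s\<^sup>2 * k" | "s\<^sup>2 * k \<le> b - z" by linarith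
  then show ?thesis
    using leader_profit_optimal_shutdown leader_profit_optimal_interior leader_profit_optimal_capacity assms
    by cases blast+
qed

lemma leader_best_response_attains_max:
  assumes "1 < s" "0 < k" "leader_best_response s k b z"
  shows "0 \<le> z \<and> leader_profit s k b z = max_leader_profit s k b"
proof -
  have s0: "s \<noteq> 0" using assms by simp
  consider "b \<le> 0" "z = 0" | "0 < b" "b \<le> k * s * (s + 1)" "z = b / 2"
    | "k * s * (s + 1) \<le> b" "z = (b - (s\<^sup>2 - 1) * k) / 2"
    using assms unfolding leader_best_response_def by blast
  then show ?thesis
  proof cases
    case 1
    then show ?thesis unfolding leader_profit_def max_leader_profit_def by simp
  next
    case 2
    have "k * s * (s + 1) \<le> 2 * (s\<^sup>2 * k)" using assms by (simp add: power2_eq_square algebra_simps)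
    then have "leader_profit s k b z = z * (b - z) / s\<^sup>2"
      using 2 s0 by (intro leader_profit_interior) auto
    then show ?thesis using 2 unfolding max_leader_profit_def 2(3) by (simp add: power2_eq_square)
  next
    case 3
    have "(s\<^sup>2 + 1) * k \<le> k * s * (s + 1)" using assms by (simp add: power2_eq_square algebra_simps)
    then have "leader_profit s k b z = z * (b - z - (s\<^sup>2 - 1) * k)"
      using 3 assms by (intro leader_profit_capacity) (auto simp: algebra_simps)
    also have "\<dots> = (b - (s\<^sup>2 - 1) * k)\<^sup>2 / 4"
    proof -
      have b: "b = 2 * z + (s\<^sup>2 - 1) * k" using 3 by simp
      show ?thesis unfolding b by (simp add: power2_eq_square field_simps)
    qed
    finally have profit: "leader_profit s k b z = max_leader_profit s k b"
      using 3(1) max_leader_profit_capacity[of s k b] assms by simp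
    have "k * s * (s + 1) - (s\<^sup>2 - 1) * k = k * (s + 1)" by (simp add: power2_eq_square algebra_simps)
    then have "k * (s + 1) \<le> b - (s\<^sup>2 - 1) * k" using 3(1) by (metis diff_right_mono)
    moreover have "0 < k * (s + 1)" using assms by simp
    ultimately have "0 \<le> b - (s\<^sup>2 - 1) * k" by (meson less_le_trans less_imp_le)
    then have "0 \<le> z" using 3(2) by simp
    with profit show ?thesis by blast
  qed
qed

lemma ex_leader_best_response: "\<exists>z. leader_best_response s k b z"
  unfolding leader_best_response_def
  by (rule exI[of _ "if b \<le> 0 then 0 else if b \<le> k * s * (s + 1) then b / 2 else (b - (s\<^sup>2 - 1) * k) / 2"])
    auto

lemma leader_profit_maximal_iff:
  assumes "1 < s" "0 < k" "0 \<le> z"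
  shows "(\<forall>w\<ge>0. leader_profit s k b w \<le> leader_profit s k b z) \<longleftrightarrow> leader_best_response s k b z"
proof
  assume maximal: "\<forall>w\<ge>0. leader_profit s k b w \<le> leader_profit s k b z"
  obtain w where "leader_best_response s k b w" using ex_leader_best_response by blast
  then have "max_leader_profit s k b \<le> leader_profit s k b z"
    using maximal leader_best_response_attains_max assms by metis
  moreover note leader_profit_le_max[OF assms, where b = b]
  ultimately show "leader_best_response s k b z" by simp
next
  assume "leader_best_response s k b z"
  then show "\<forall>w\<ge>0. leader_profit s k b w \<le> leader_profit s k b z"
    using leader_best_response_attains_max leader_profit_le_max assms by metis
qed

section \<open>Symmetric Stackelberg equilibria\<close>

lemma psi_zero_forward:
  assumes "0 < \<beta>" "0 \<le> k" "c = C" "i < M" "s\<^sup>2 = real N + 1"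
  shows "psi \<alpha> \<beta> C c k M N i z x (\<lambda>_. 0) = \<beta> * leader_profit s k (alpha_x \<alpha> \<beta> C - (real M - 1) * x) z"
proof -
  define xs where "xs = (\<lambda>_::nat. x)(i := z)"
  have sum_xs: "sum xs {..<M} = (real M - 1) * x + z"
    using sum_fun_upd[of "{..<M}" i "\<lambda>_. x" z] assms unfolding xs_def by (simp add: algebra_simps)
  define y where "y = clip k (((\<alpha> - c) / \<beta> - sum xs {..<M}) / (real N + 1))"
  have "(\<Sum>j<N. spot_y \<alpha> \<beta> c k M N (\<lambda>_. 0) xs j) = N * y"
    using spot_y_zero_forward[of \<beta> k] assms unfolding y_def by simp
  moreover have "y = clip k ((alpha_x \<alpha> \<beta> C - (real M - 1) * x - z) / s\<^sup>2)"
    using assms unfolding y_def alpha_x_def sum_xs by (simp add: algebra_simps)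
  moreover have "xs i = z" unfolding xs_def by simp
  ultimately show ?thesis
    using assms unfolding psi_def leader_payoff_def leader_profit_def invdem_def xs_def[symmetric] sum_xs
    by (simp add: alpha_x_def field_simps)
qed

lemma X0_iff_leader_best_response:
  assumes "1 \<le> M" "0 < \<beta>" "0 < k" "c = C" "1 < s" "s\<^sup>2 = real N + 1"
  shows "x \<in> X0 \<alpha> \<beta> C c k M N \<longleftrightarrow>
    0 \<le> x \<and> leader_best_response s k (alpha_x \<alpha> \<beta> C - (real M - 1) * x) x"
proof -
  define b where "b = alpha_x \<alpha> \<beta> C - (real M - 1) * x"
  have "psi \<alpha> \<beta> C c k M N i z x (\<lambda>_. 0) = \<beta> * leader_profit s k b z" if "i < M" for i z
    using psi_zero_forward[of \<beta> k c C i M s N] assms that unfolding b_def by simp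
  moreover have "\<exists>i. i < M" using assms by (intro exI[of _ 0]) simp
  ultimately have "(\<forall>i<M. \<forall>z\<ge>0. psi \<alpha> \<beta> C c k M N i z x (\<lambda>_. 0) \<le> psi \<alpha> \<beta> C c k M N i x x (\<lambda>_. 0))
      \<longleftrightarrow> (\<forall>z\<ge>0. leader_profit s k b z \<le> leader_profit s k b x)"
    using assms by simp
  then show ?thesis
    using leader_profit_maximal_iff[of s k x b] assms unfolding X0_def b_def by auto
qed

lemma symmetric_leader_best_response_iff:
  fixes M a x s k :: real
  assumes "1 \<le> M" "1 < s" "0 < k"
  shows "0 \<le> x \<and> leader_best_response s k (a - (M - 1) * x) x \<longleftrightarrow>
    (a \<le> 0 \<and> x = 0) \<or> (0 < a \<and> a \<le> (M + 1) * (k * s * (s + 1) / 2) \<and> x = a / (M + 1)) \<or>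
    ((s\<^sup>2 - 1) * k + (M + 1) * (k * (s + 1) / 2) \<le> a \<and> x = (a - (s\<^sup>2 - 1) * k) / (M + 1))"
proof -
  define b where "b = a - (M - 1) * x"
  have m: "0 < M + 1" using assms by simp
  have shutdown: "b \<le> 0 \<and> x = 0 \<longleftrightarrow> a \<le> 0 \<and> x = 0" unfolding b_def by auto
  have interior: "0 < b \<and> b \<le> k * s * (s + 1) \<and> x = b / 2 \<longleftrightarrow>
      0 < a \<and> a \<le> (M + 1) * (k * s * (s + 1) / 2) \<and> x = a / (M + 1)"
  proof (cases "a = (M + 1) * x")
    case True
    have "b = 2 * x" unfolding b_def True by (simp add: algebra_simps)
    moreover have "0 < (M + 1) * x \<longleftrightarrow> 0 < x" using m by (simp add: zero_less_mult_iff)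
    moreover have "(M + 1) * x \<le> (M + 1) * (k * s * (s + 1) / 2) \<longleftrightarrow> x \<le> k * s * (s + 1) / 2"
      using m by (simp add: mult_le_cancel_left_pos del: times_divide_eq_right)
    ultimately show ?thesis using True m by auto
  next
    case False
    then have "x \<noteq> b / 2" "x \<noteq> a / (M + 1)" using m unfolding b_def by (auto simp: field_simps)
    then show ?thesis by simp
  qed
  have capacity: "k * s * (s + 1) \<le> b \<and> x = (b - (s\<^sup>2 - 1) * k) / 2 \<longleftrightarrow>
      (s\<^sup>2 - 1) * k + (M + 1) * (k * (s + 1) / 2) \<le> a \<and> x = (a - (s\<^sup>2 - 1) * k) / (M + 1)"
  proof (cases "a = (M + 1) * x + (s\<^sup>2 - 1) * k")
    case True
    have "b = 2 * x + (s\<^sup>2 - 1) * k" unfolding b_def True by (simp add: algebra_simps)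
    moreover have "k * s * (s + 1) \<le> 2 * x + (s\<^sup>2 - 1) * k \<longleftrightarrow> k * (s + 1) / 2 \<le> x"
      by (simp add: power2_eq_square algebra_simps)
    moreover have "(M + 1) * (k * (s + 1) / 2) \<le> (M + 1) * x \<longleftrightarrow> k * (s + 1) / 2 \<le> x"
      using m by (simp add: mult_le_cancel_left_pos del: times_divide_eq_right)
    ultimately show ?thesis using True m by auto
  next
    case False
    then have "x \<noteq> (b - (s\<^sup>2 - 1) * k) / 2" "x \<noteq> (a - (s\<^sup>2 - 1) * k) / (M + 1)"
      using m unfolding b_def by (auto simp: field_simps)
    then show ?thesis by simp
  qed
  have "0 \<le> x" if "(s\<^sup>2 - 1) * k + (M + 1) * (k * (s + 1) / 2) \<le> a" "x = (a - (s\<^sup>2 - 1) * k) / (M + 1)"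
  proof -
    have "0 \<le> (M + 1) * (k * (s + 1) / 2)" using assms by simp
    then show ?thesis using that m by simp
  qed
  then show ?thesis
    using shutdown interior capacity m unfolding leader_best_response_def b_def[symmetric] by auto
qed

definition ybar :: "real \<Rightarrow> nat \<Rightarrow> real" where
  "ybar k N = k * (sqrt (real N + 1) + 1) / (2 * sqrt (real N + 1))"

definition alpha_bar :: "nat \<Rightarrow> real \<Rightarrow> nat \<Rightarrow> real" where
  "alpha_bar M k N = (real M + 1) * (real N + 1) * ybar k N"

definition alpha_low :: "nat \<Rightarrow> real \<Rightarrow> nat \<Rightarrow> real" where
  "alpha_low M k N = real N * k + (real M + 1) * (k * (sqrt (real N + 1) + 1) / 2)"

lemma ybar_pos:
  assumes "0 < k"
  shows "0 < ybar k N"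
proof -
  have "0 < sqrt (real N + 1)" by simp
  then show ?thesis using assms unfolding ybar_def
    by (intro divide_pos_pos mult_pos_pos) (auto intro: add_pos_pos)
qed

lemma ybar_less:
  assumes "0 < k" "1 \<le> N"
  shows "ybar k N < k"
proof -
  have "1 < sqrt (real N + 1)" using assms by simp
  then show ?thesis using assms unfolding ybar_def by (simp add: field_simps)
qed

lemma alpha_bar_eq:
  "alpha_bar M k N = (real M + 1) * (k * sqrt (real N + 1) * (sqrt (real N + 1) + 1) / 2)"
proof -
  have "0 < sqrt (real N + 1)" by simp
  moreover have "(sqrt (real N + 1))\<^sup>2 = real N + 1" by simp
  ultimately show ?thesis unfolding alpha_bar_def ybar_def by (simp add: field_simps power2_eq_square)
qed

lemma le_alpha_bar_iff: "a \<le> alpha_bar M k N \<longleftrightarrow> a / ((real M + 1) * (real N + 1)) \<le> ybar k N"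
proof -
  have "0 < (real M + 1) * (real N + 1)" by simp
  then show ?thesis unfolding alpha_bar_def by (simp add: pos_divide_le_eq mult.commute)
qed

lemma alpha_bar_pos: "0 < k \<Longrightarrow> 0 < alpha_bar M k N"
  using ybar_pos unfolding alpha_bar_def by simp

lemma alpha_low_pos:
  assumes "0 < k"
  shows "0 < alpha_low M k N"
proof -
  have "0 < sqrt (real N + 1) + 1" by (intro add_nonneg_pos) simp_all
  then show ?thesis using assms unfolding alpha_low_def by (intro add_nonneg_pos mult_pos_pos) auto
qed

lemma alpha_low_le_alpha_bar:
  assumes "1 \<le> M" "0 < k"
  shows "alpha_low M k N \<le> alpha_bar M k N"
proof -
  have "alpha_bar M k N - alpha_low M k N = real N * k * (real M - 1) / 2"
    unfolding alpha_bar_eq alpha_low_def by (simp add: field_simps power2_eq_square[symmetric])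
  moreover have "0 \<le> real N * k * (real M - 1)" using assms by simp
  ultimately show ?thesis by simp
qed

lemma X0_iff:
  assumes "1 \<le> M" "0 < \<beta>" "0 < k" "c = C" "1 \<le> N"
  shows "x \<in> X0 \<alpha> \<beta> C c k M N \<longleftrightarrow>
    (alpha_x \<alpha> \<beta> C \<le> 0 \<and> x = 0) \<or>
    (0 < alpha_x \<alpha> \<beta> C \<and> alpha_x \<alpha> \<beta> C \<le> alpha_bar M k N \<and> x = alpha_x \<alpha> \<beta> C / (real M + 1)) \<or>
    (alpha_low M k N \<le> alpha_x \<alpha> \<beta> C \<and> x = (alpha_x \<alpha> \<beta> C - real N * k) / (real M + 1))"
proof -
  define s where "s = sqrt (real N + 1)"
  have s: "1 < s" "s\<^sup>2 = real N + 1" using assms unfolding s_def by simp_all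
  have "(s\<^sup>2 - 1) * k = real N * k" using s by simp
  then show ?thesis
    using X0_iff_leader_best_response[OF assms(1-4) s] symmetric_leader_best_response_iff[of "real M" s k]
      assms s
    unfolding alpha_bar_eq alpha_low_def s_def[symmetric] by simp
qed

lemma y_sym_zero_forward:
  assumes "0 < \<beta>" "0 \<le> k" "c = C" "j < N"
  shows "y_sym \<alpha> \<beta> c k M N x j = clip k ((alpha_x \<alpha> \<beta> C - real M * x) / (real N + 1))"
  using assms unfolding y_sym_def spot_y_zero_forward[OF assms(1,2)] alpha_x_def by simp

lemma ex_X0_y_sym_iff:
  assumes "1 \<le> M" "0 < \<beta>" "0 < k" "c = C" "1 \<le> N"
  shows "(\<exists>x\<in>X0 \<alpha> \<beta> C c k M N. \<forall>j<N. P (y_sym \<alpha> \<beta> c k M N x j)) \<longleftrightarrow>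
    (alpha_x \<alpha> \<beta> C \<le> 0 \<and> P 0) \<or>
    (0 < alpha_x \<alpha> \<beta> C \<and> alpha_x \<alpha> \<beta> C \<le> alpha_bar M k N \<and>
      P (alpha_x \<alpha> \<beta> C / ((real M + 1) * (real N + 1)))) \<or>
    (alpha_low M k N \<le> alpha_x \<alpha> \<beta> C \<and> P k)"
proof -
  define a where "a = alpha_x \<alpha> \<beta> C"
  define y where "y x = clip k ((a - real M * x) / (real N + 1))" for x
  have m: "0 < real M + 1" "0 < real N + 1" by simp_all
  have "\<exists>j. j < N" using assms by (intro exI[of _ 0]) simp
  then have "(\<forall>j<N. P (y_sym \<alpha> \<beta> c k M N x j)) \<longleftrightarrow> P (y x)" for x
    using y_sym_zero_forward[of \<beta> k c C] assms unfolding y_def a_def by auto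
  then have "(\<exists>x\<in>X0 \<alpha> \<beta> C c k M N. \<forall>j<N. P (y_sym \<alpha> \<beta> c k M N x j)) \<longleftrightarrow>
      (a \<le> 0 \<and> P (y 0)) \<or> (0 < a \<and> a \<le> alpha_bar M k N \<and> P (y (a / (real M + 1)))) \<or>
      (alpha_low M k N \<le> a \<and> P (y ((a - real N * k) / (real M + 1))))"
    using X0_iff[OF assms] unfolding a_def by auto
  moreover have "y 0 = 0" if "a \<le> 0"
  proof -
    have "a / (real N + 1) \<le> 0" using that m by (intro divide_nonpos_pos) auto
    then show ?thesis using assms unfolding y_def clip_def by simp
  qed
  moreover have "y (a / (real M + 1)) = a / ((real M + 1) * (real N + 1))" if "0 < a" "a \<le> alpha_bar M k N"
  proof -
    have "(a - real M * (a / (real M + 1))) / (real N + 1) = a / ((real M + 1) * (real N + 1))"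
      using m by (simp add: field_simps)
    moreover have "a / ((real M + 1) * (real N + 1)) \<le> ybar k N"
      using that le_alpha_bar_iff by blast
    ultimately show ?thesis
      using that ybar_less[of k N] assms m unfolding y_def clip_def by simp
  qed
  moreover have "y ((a - real N * k) / (real M + 1)) = k" if "alpha_low M k N \<le> a"
  proof -
    have "(real M + 1) * k \<le> (real M + 1) * (k * (sqrt (real N + 1) + 1) / 2)"
      using assms by (intro mult_left_mono) auto
    then have "real N * k + (real M + 1) * k \<le> a" using that unfolding alpha_low_def by linarith
    then have "(real N + 1) * (real M + 1) * k \<le> a + real M * real N * k" by (simp add: algebra_simps)
    moreover have "(a - real M * ((a - real N * k) / (real M + 1))) / (real N + 1)
        = (a + real M * real N * k) / ((real N + 1) * (real M + 1))"
      using m by (simp add: field_simps)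
    ultimately have "k \<le> (a - real M * ((a - real N * k) / (real M + 1))) / (real N + 1)"
      using m by (simp add: pos_le_divide_eq mult.commute)
    then show ?thesis using assms unfolding y_def clip_def by simp
  qed
  ultimately show ?thesis unfolding a_def by auto
qed

lemma ex_alpha_x_eq:
  assumes "0 < \<beta>" "0 < C" "0 \<le> t"
  shows "\<exists>\<alpha>>0. alpha_x \<alpha> \<beta> C = t"
proof (intro exI conjI)
  show "0 < C + \<beta> * t" using assms by (simp add: add_pos_nonneg)
  show "alpha_x (C + \<beta> * t) \<beta> C = t" using assms unfolding alpha_x_def by simp
qed

lemma alpha_x_le_threshold_unique:
  assumes "0 < \<beta>" "0 < C" "0 \<le> a" "0 \<le> a'"
    and "\<forall>\<alpha>>0. alpha_x \<alpha> \<beta> C \<le> a' \<longleftrightarrow> alpha_x \<alpha> \<beta> C \<le> a"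
  shows "a' = a"
proof -
  obtain \<alpha> \<alpha>' where "0 < \<alpha>" "alpha_x \<alpha> \<beta> C = a" "0 < \<alpha>'" "alpha_x \<alpha>' \<beta> C = a'"
    using ex_alpha_x_eq[OF assms(1,2)] assms(3,4) by metis
  then show ?thesis using assms(5) by (metis order_antisym order_refl)
qed

text \<open>Positivity of \<open>a\<close> is needed: \<open>alpha_x\<close> also takes the negative values of \<open>(- C / \<beta>, 0)\<close>.\<close>

lemma alpha_x_ge_threshold_unique:
  assumes "0 < \<beta>" "0 < C" "0 < a"
    and "\<forall>\<alpha>>0. a' \<le> alpha_x \<alpha> \<beta> C \<longleftrightarrow> a \<le> alpha_x \<alpha> \<beta> C"
  shows "a' = a"
proof -
  obtain \<alpha> where "0 < \<alpha>" "alpha_x \<alpha> \<beta> C = a"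
    using ex_alpha_x_eq[OF assms(1,2), of a] assms(3) by auto
  then have "a' \<le> a" using assms(4) by auto
  obtain \<alpha>' where "0 < \<alpha>'" "alpha_x \<alpha>' \<beta> C = max a' 0"
    using ex_alpha_x_eq[OF assms(1,2), of "max a' 0"] by auto
  then have "a \<le> max a' 0" using assms(4) by auto
  then show ?thesis using \<open>a' \<le> a\<close> assms(3) by linarith
qed

lemma threshold_unique:
  fixes a b k :: real
  assumes "0 \<le> a" "a < k" "b < k"
    and "\<forall>y. 0 \<le> y \<and> y \<le> k \<longrightarrow> (y \<le> b \<or> y = k \<longleftrightarrow> y \<le> a \<or> y = k)"
  shows "b = a"
proof -
  have "a \<le> b" using assms(4)[rule_format, of a] assms(1,2) by auto
  moreover have "\<not> a < b" using assms(4)[rule_format, of b] assms(1,3) by auto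
  ultimately show ?thesis by simp
qed

lemma equilibrium_output_iff:
  assumes "1 \<le> M" "0 < \<beta>" "0 < C" "c = C" "0 < k" "1 \<le> N" "0 \<le> y" "y \<le> k"
  shows "(\<exists>\<alpha>>0. \<exists>x\<in>X0 \<alpha> \<beta> C c k M N. \<forall>j<N. y_sym \<alpha> \<beta> c k M N x j = y) \<longleftrightarrow>
    y \<le> ybar k N \<or> y = k"
proof
  assume "\<exists>\<alpha>>0. \<exists>x\<in>X0 \<alpha> \<beta> C c k M N. \<forall>j<N. y_sym \<alpha> \<beta> c k M N x j = y"
  then show "y \<le> ybar k N \<or> y = k"
    using ex_X0_y_sym_iff[OF assms(1,2,5,4,6), where P = "\<lambda>v. v = y"] ybar_pos[OF assms(5), of N]
    by (auto simp: le_alpha_bar_iff)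
next
  assume y: "y \<le> ybar k N \<or> y = k"
  define t where "t = (if y = k then alpha_low M k N else (real M + 1) * (real N + 1) * y)"
  have "0 \<le> t" using alpha_low_pos[OF assms(5), of M N] assms unfolding t_def by auto
  then obtain \<alpha> where "0 < \<alpha>" "alpha_x \<alpha> \<beta> C = t" using ex_alpha_x_eq assms by metis
  moreover have "y = 0 \<or> y = k \<or> (0 < t \<and> t \<le> alpha_bar M k N \<and> t / ((real M + 1) * (real N + 1)) = y)"
    using y assms le_alpha_bar_iff[of t M k N] unfolding t_def by auto
  ultimately show "\<exists>\<alpha>>0. \<exists>x\<in>X0 \<alpha> \<beta> C c k M N. \<forall>j<N. y_sym \<alpha> \<beta> c k M N x j = y"
    using ex_X0_y_sym_iff[OF assms(1,2,5,4,6), where P = "\<lambda>v. v = y"] unfolding t_def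
    by (auto split: if_splits)
qed

lemma alpha_x_le_alpha_bar_iff:
  assumes "1 \<le> M" "0 < \<beta>" "c = C" "0 < k" "1 \<le> N"
  shows "alpha_x \<alpha> \<beta> C \<le> alpha_bar M k N \<longleftrightarrow>
    (\<exists>x\<in>X0 \<alpha> \<beta> C c k M N. \<forall>j<N. y_sym \<alpha> \<beta> c k M N x j \<le> ybar k N)"
  using ex_X0_y_sym_iff[OF assms(1,2,4,3,5), where P = "\<lambda>v. v \<le> ybar k N"]
    ybar_pos[OF assms(4), of N] ybar_less[OF assms(4,5)] alpha_bar_pos[OF assms(4), of M N]
    le_alpha_bar_iff[of "alpha_x \<alpha> \<beta> C" M k N]
  by auto

lemma alpha_low_le_alpha_x_iff:
  assumes "1 \<le> M" "0 < \<beta>" "c = C" "0 < k" "1 \<le> N"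
  shows "alpha_low M k N \<le> alpha_x \<alpha> \<beta> C \<longleftrightarrow>
    (\<exists>x\<in>X0 \<alpha> \<beta> C c k M N. \<forall>j<N. y_sym \<alpha> \<beta> c k M N x j = k)"
  using ex_X0_y_sym_iff[OF assms(1,2,4,3,5), where P = "\<lambda>v. v = k"]
    ybar_less[OF assms(4,5)] le_alpha_bar_iff[of "alpha_x \<alpha> \<beta> C" M k N] assms(4)
  by auto

lemma card_X0:
  assumes "1 \<le> M" "0 < \<beta>" "c = C" "0 < k" "1 \<le> N"
    and "alpha_low M k N \<le> alpha_x \<alpha> \<beta> C" "alpha_x \<alpha> \<beta> C \<le> alpha_bar M k N"
  shows "card (X0 \<alpha> \<beta> C c k M N) = 2"
proof -
  define a where "a = alpha_x \<alpha> \<beta> C"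
  have "0 < a" using alpha_low_pos[OF assms(4), of M N] assms(6) unfolding a_def by linarith
  then have "X0 \<alpha> \<beta> C c k M N = {a / (real M + 1), (a - real N * k) / (real M + 1)}"
    using X0_iff[OF assms(1,2,4,3,5)] assms(6,7) unfolding a_def by auto
  moreover have "a / (real M + 1) \<noteq> (a - real N * k) / (real M + 1)"
    using assms(4,5) by (simp add: divide_cancel_right)
  ultimately show ?thesis by simp
qed

lemma ybar_asymptotics:
  assumes "k \<noteq> 0"
  shows "(\<lambda>N. ybar k N / (k / 2) - 1) \<in> O(\<lambda>N. 1 / sqrt (real N))"
proof (rule bigoI[where c = 1])
  show "\<forall>\<^sub>F N in at_top. norm (ybar k N / (k / 2) - 1) \<le> 1 * norm (1 / sqrt (real N))"
  proof (rule eventually_mono[OF eventually_ge_at_top[of 1]])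
    fix N :: nat
    assume "1 \<le> N"
    have "ybar k N / (k / 2) - 1 = 1 / sqrt (real N + 1)"
      using assms unfolding ybar_def by (simp add: field_simps)
    moreover have "1 / sqrt (real N + 1) \<le> 1 / sqrt (real N)"
      using \<open>1 \<le> N\<close> by (intro divide_left_mono) auto
    ultimately show "norm (ybar k N / (k / 2) - 1) \<le> 1 * norm (1 / sqrt (real N))" by simp
  qed
qed

lemma ex1_alpha_bar:
  assumes "1 \<le> M" "0 < \<beta>" "0 < C" "c = C" "0 < k" "1 \<le> N"
  shows "\<exists>!a. 0 \<le> a \<and> (\<forall>\<alpha>>0. alpha_x \<alpha> \<beta> C \<le> a \<longleftrightarrow>
    (\<exists>x\<in>X0 \<alpha> \<beta> C c k M N. \<forall>j<N. y_sym \<alpha> \<beta> c k M N x j \<le> ybar k N))"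
proof (rule ex1I[of _ "alpha_bar M k N"])
  show "0 \<le> alpha_bar M k N \<and> (\<forall>\<alpha>>0. alpha_x \<alpha> \<beta> C \<le> alpha_bar M k N \<longleftrightarrow>
      (\<exists>x\<in>X0 \<alpha> \<beta> C c k M N. \<forall>j<N. y_sym \<alpha> \<beta> c k M N x j \<le> ybar k N))"
    using alpha_bar_pos[of k M N] alpha_x_le_alpha_bar_iff assms by simp
next
  fix a
  assume "0 \<le> a \<and> (\<forall>\<alpha>>0. alpha_x \<alpha> \<beta> C \<le> a \<longleftrightarrow>
      (\<exists>x\<in>X0 \<alpha> \<beta> C c k M N. \<forall>j<N. y_sym \<alpha> \<beta> c k M N x j \<le> ybar k N))"
  then show "a = alpha_bar M k N"
    using alpha_bar_pos[of k M N] alpha_x_le_alpha_bar_iff[of M \<beta> c C k N] assms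
    by (intro alpha_x_le_threshold_unique[OF assms(2,3)]) auto
qed

lemma ex1_alpha_low:
  assumes "1 \<le> M" "0 < \<beta>" "0 < C" "c = C" "0 < k" "1 \<le> N"
  shows "\<exists>!a. a \<le> alpha_bar M k N \<and> (\<forall>\<alpha>>0. a \<le> alpha_x \<alpha> \<beta> C \<longleftrightarrow>
    (\<exists>x\<in>X0 \<alpha> \<beta> C c k M N. \<forall>j<N. y_sym \<alpha> \<beta> c k M N x j = k))"
proof (rule ex1I[of _ "alpha_low M k N"])
  show "alpha_low M k N \<le> alpha_bar M k N \<and> (\<forall>\<alpha>>0. alpha_low M k N \<le> alpha_x \<alpha> \<beta> C \<longleftrightarrow>
      (\<exists>x\<in>X0 \<alpha> \<beta> C c k M N. \<forall>j<N. y_sym \<alpha> \<beta> c k M N x j = k))"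
    using alpha_low_le_alpha_bar alpha_low_le_alpha_x_iff assms by simp
next
  fix a
  assume "a \<le> alpha_bar M k N \<and> (\<forall>\<alpha>>0. a \<le> alpha_x \<alpha> \<beta> C \<longleftrightarrow>
      (\<exists>x\<in>X0 \<alpha> \<beta> C c k M N. \<forall>j<N. y_sym \<alpha> \<beta> c k M N x j = k))"
  then show "a = alpha_low M k N"
    using alpha_low_pos[of k M N] alpha_low_le_alpha_x_iff[of M \<beta> c C k N] assms
    by (intro alpha_x_ge_threshold_unique[OF assms(2,3)]) auto
qed

theorem lemma7:
  fixes M :: nat and \<beta> C c k :: real
  assumes M: "M \<ge> 1" and \<beta>: "\<beta> > 0" and C: "C > 0" and cC: "c \<ge> C" and k: "k > 0"
    and dC: "deltaC \<beta> C c = 0"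
  shows "\<exists>ybar :: nat \<Rightarrow> real.
    (\<forall>N\<ge>2.
       ybar N < k \<and>
       (\<forall>y. 0 \<le> y \<and> y \<le> k \<longrightarrow>
          ((\<exists>\<alpha>>0. \<exists>x\<in>X0 \<alpha> \<beta> C c k M N. \<forall>j<N. y_sym \<alpha> \<beta> c k M N x j = y)
             \<longleftrightarrow> (y \<le> ybar N \<or> y = k))) \<and>
       (\<forall>y'. y' < k \<and>
          (\<forall>y. 0 \<le> y \<and> y \<le> k \<longrightarrow>
             ((\<exists>\<alpha>>0. \<exists>x\<in>X0 \<alpha> \<beta> C c k M N. \<forall>j<N. y_sym \<alpha> \<beta> c k M N x j = y)
                \<longleftrightarrow> (y \<le> y' \<or> y = k)))
          \<longrightarrow> y' = ybar N) \<and>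
       (\<exists>!abar. abar \<ge> 0 \<and>
          (\<forall>\<alpha>>0. alpha_x \<alpha> \<beta> C \<le> abar \<longleftrightarrow>
             (\<exists>x\<in>X0 \<alpha> \<beta> C c k M N. \<forall>j<N. y_sym \<alpha> \<beta> c k M N x j \<le> ybar N))) \<and>
       (\<exists>abar alow. abar \<ge> 0 \<and>
          (\<forall>\<alpha>>0. alpha_x \<alpha> \<beta> C \<le> abar \<longleftrightarrow>
             (\<exists>x\<in>X0 \<alpha> \<beta> C c k M N. \<forall>j<N. y_sym \<alpha> \<beta> c k M N x j \<le> ybar N)) \<and>
          (\<exists>!a. a \<le> abar \<and>
             (\<forall>\<alpha>>0. alpha_x \<alpha> \<beta> C \<ge> a \<longleftrightarrow>
                (\<exists>x\<in>X0 \<alpha> \<beta> C c k M N. \<forall>j<N. y_sym \<alpha> \<beta> c k M N x j = k))) \<and>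
          alow \<le> abar \<and>
          (\<forall>\<alpha>>0. alpha_x \<alpha> \<beta> C \<ge> alow \<longleftrightarrow>
             (\<exists>x\<in>X0 \<alpha> \<beta> C c k M N. \<forall>j<N. y_sym \<alpha> \<beta> c k M N x j = k)) \<and>
          (\<forall>\<alpha>>0. alow \<le> alpha_x \<alpha> \<beta> C \<and> alpha_x \<alpha> \<beta> C \<le> abar \<longrightarrow>
             card (X0 \<alpha> \<beta> C c k M N) = 2))) \<and>
    (\<lambda>N. ybar N / (k / 2) - 1) \<in> O(\<lambda>N. 1 / sqrt (real N))"
proof -
  have c_eq_C: "c = C" using dC \<beta> unfolding deltaC_def by simp
  have N: "1 \<le> N" if "2 \<le> N" for N :: nat using that by simp
  show ?thesis
    apply (intro exI[of _ "ybar k"] conjI allI impI)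
    subgoal for N using ybar_less[OF k N] .
    subgoal for N y using equilibrium_output_iff[OF M \<beta> C c_eq_C k N] by simp
    subgoal for N y'
      using less_imp_le[OF ybar_pos[OF k]] ybar_less[OF k N] equilibrium_output_iff[OF M \<beta> C c_eq_C k N]
      by (intro threshold_unique[where k = k]) auto
    subgoal for N using ex1_alpha_bar[OF M \<beta> C c_eq_C k N] .
    subgoal for N
      using ex1_alpha_low[OF M \<beta> C c_eq_C k N] alpha_bar_pos[OF k, of M N] alpha_low_le_alpha_bar[OF M k, of N]
      by (intro exI[of _ "alpha_bar M k N"] exI[of _ "alpha_low M k N"] conjI allI impI)
        (simp_all add: alpha_x_le_alpha_bar_iff[OF M \<beta> c_eq_C k N] alpha_low_le_alpha_x_iff[OF M \<beta> c_eq_C k N]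
          card_X0[OF M \<beta> c_eq_C k N])
    subgoal using ybar_asymptotics k by simp
    done
qed
end
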